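(* Let $X$ be a countable set with at least two elements, equipped with the discrete metric $\rho$, and denote this metric space by $\mathcal{X}$. Let $p\in(0,\infty)$ and let $f:\mathcal{W}_p(\mathcal{X})\to\mathcal{W}_p(\mathcal{X})$ be a surjective isometry (a bijection preserving $W_p$). Then there exists a bijection $\sigma:\mathcal{X}\to\mathcal{X}$ such that $$f(\mu)(\{x\})=\mu(\{\sigma^{-1}(x)\})\qquad\text{for all }x\in\mathcal{X}\text{ and all }\mu\in\mathcal{P}(\mathcal{X}).$$ Conversely, for any bijection $\sigma:\mathcal{X}\to\mathcal{X}$, the map defined by this formula is an isometry of $\mathcal{W}_p(\mathcal{X})$.
   Context: $\rho(x,y)=1$ if $x\ne y$ and $\rho(x,x)=0$. $\mathcal{P}(\mathcal{X})$ is the set of probability measures on the power set of $\mathcal{X}$. A coupling of $\mu,\nu\in\mathcal{P}(\mathcal{X})$ is a probability measure $\pi$ on $\mathcal{X}^2$ with marginals $\mu$ and $\nu$; $\mathcal{C}(\mu,\nu)$ is the set of couplings. $W_p(\mu,\nu)=\big(\inf_{\pi\in\mathcal{C}(\mu,\nu)}\int\rho^p\,d\pi\big)^{1/p}$ for $p\ge1$ and $W_p(\mu,\nu)=\inf_{\pi\in\mathcal{C}(\mu,\nu)}\int\rho^p\,d\pi$ for $0<p<1$. $\mathcal{W}_p(\mathcal{X})$ is the metric space $(\mathcal{P}(\mathcal{X}),W_p)$. *)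

theory Defs
  imports "HOL-Probability.Probability"
begin

definition rho :: "'a \<Rightarrow> 'a \<Rightarrow> real" where
  "rho x y = (if x = y then 0 else 1)"

text \<open>Couplings of two probability measures on a countable set (all such measures are pmfs).\<close>
definition couplings :: "'a pmf \<Rightarrow> 'a pmf \<Rightarrow> ('a \<times> 'a) pmf set" where
  "couplings \<mu> \<nu> = {\<pi>. map_pmf fst \<pi> = \<mu> \<and> map_pmf snd \<pi> = \<nu>}"

definition Wp :: "real \<Rightarrow> 'a pmf \<Rightarrow> 'a pmf \<Rightarrow> real" where
  "Wp p \<mu> \<nu> =
     (let c = (INF \<pi>\<in>couplings \<mu> \<nu>.
                 measure_pmf.expectation \<pi> (\<lambda>(x, y). rho x y powr p))
      in if p \<ge> 1 then c powr (1 / p) else c)"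

end

theory Submission
  imports Defs
begin

text \<open>For the discrete metric, \<open>\<rho> x y powr p\<close> is the indicator of \<open>x \<noteq> y\<close>, so every \<open>W\<^sub>p\<close> is a
  strictly increasing function of the total variation distance
  \<open>tv_dist \<mu> \<nu> = inf\<^sub>\<pi> \<pi>{x \<noteq> y}\<close>; hence isometries of \<open>W\<^sub>p\<close> are exactly those of \<open>tv_dist\<close>.
  Two measures are at distance 1 iff their supports are disjoint, and
  \<open>tv_dist (\<delta>\<^sub>x) \<mu> = 1 - \<mu>{x}\<close>. A bijective isometry \<open>f\<close> maps point masses to point masses:
  pick \<open>y\<close> in the support of \<open>f \<delta>\<^sub>x\<close>; any \<open>z \<noteq> x\<close> in the support of \<open>f\<inverse> \<delta>\<^sub>y\<close> would make
  \<open>f \<delta>\<^sub>z\<close> disjoint from \<open>f \<delta>\<^sub>x\<close> but not from \<open>\<delta>\<^sub>y\<close>. So \<open>f \<delta>\<^sub>x = \<delta>\<^bsub>\<sigma> x\<^esub>\<close> for a bijection \<open>\<sigma>\<close>,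
  and the formula for \<open>tv_dist (\<delta>\<^sub>x) \<mu>\<close> shows \<open>f \<mu> = \<sigma>\<^sub>*\<mu>\<close>.\<close>

definition mismatch_prob :: "('a \<times> 'a) pmf \<Rightarrow> real" where
  "mismatch_prob \<pi> = measure_pmf.prob \<pi> {q. fst q \<noteq> snd q}"

definition tv_dist :: "'a pmf \<Rightarrow> 'a pmf \<Rightarrow> real" where
  "tv_dist \<mu> \<nu> = (INF \<pi>\<in>couplings \<mu> \<nu>. mismatch_prob \<pi>)"

lemma expectation_rho_powr:
  assumes "p > 0"
  shows "measure_pmf.expectation \<pi> (\<lambda>(x, y). rho x y powr p) = mismatch_prob \<pi>"
proof -
  have rho_powr: "(\<lambda>(x, y). rho x y powr p) = indicator {q. fst q \<noteq> snd q}"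
    using assms by (auto simp: rho_def indicator_def fun_eq_iff)
  show ?thesis
    unfolding rho_powr mismatch_prob_def by simp
qed

lemma Wp_tv_dist:
  assumes "p > 0"
  shows "Wp p \<mu> \<nu> = (if p \<ge> 1 then tv_dist \<mu> \<nu> powr (1 / p) else tv_dist \<mu> \<nu>)"
  by (simp add: Wp_def tv_dist_def expectation_rho_powr[OF assms])

lemma pair_pmf_in_couplings: "pair_pmf \<mu> \<nu> \<in> couplings \<mu> \<nu>"
  by (simp add: couplings_def map_fst_pair_pmf map_snd_pair_pmf)

lemma set_pmf_couplings:
  assumes "\<pi> \<in> couplings \<mu> \<nu>" "(x, y) \<in> set_pmf \<pi>"
  shows "x \<in> set_pmf \<mu>" "y \<in> set_pmf \<nu>"
proof -
  have "\<mu> = map_pmf fst \<pi>" "\<nu> = map_pmf snd \<pi>"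
    using assms(1) by (simp_all add: couplings_def)
  then show "x \<in> set_pmf \<mu>" "y \<in> set_pmf \<nu>"
    using assms(2) by force+
qed

lemma tv_dist_le_mismatch_prob: "\<pi> \<in> couplings \<mu> \<nu> \<Longrightarrow> tv_dist \<mu> \<nu> \<le> mismatch_prob \<pi>"
  unfolding tv_dist_def mismatch_prob_def by (rule cInf_lower) (auto intro: bdd_belowI[where m = 0])

lemma tv_dist_greatest:
  "(\<And>\<pi>. \<pi> \<in> couplings \<mu> \<nu> \<Longrightarrow> c \<le> mismatch_prob \<pi>) \<Longrightarrow> c \<le> tv_dist \<mu> \<nu>"
  unfolding tv_dist_def using pair_pmf_in_couplings by (intro cINF_greatest) auto

lemma tv_dist_nonneg: "0 \<le> tv_dist \<mu> \<nu>"
  by (rule tv_dist_greatest) (simp add: mismatch_prob_def)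

lemma tv_dist_le_1: "tv_dist \<mu> \<nu> \<le> 1"
  using tv_dist_le_mismatch_prob[OF pair_pmf_in_couplings, of \<mu> \<nu>]
  unfolding mismatch_prob_def by (meson measure_pmf.prob_le_1 order_trans)

lemma Wp_eq_iff_tv_dist_eq:
  assumes "p > 0"
  shows "Wp p \<mu> \<nu> = Wp p \<mu>' \<nu>' \<longleftrightarrow> tv_dist \<mu> \<nu> = tv_dist \<mu>' \<nu>'"
proof (cases "p \<ge> 1")
  case True
  have "strict_mono_on {0..} (\<lambda>t :: real. t powr (1 / p))"
    using assms by (intro strict_mono_onI powr_less_mono2) auto
  then have "inj_on (\<lambda>t :: real. t powr (1 / p)) {0..}"
    by (rule strict_mono_on_imp_inj_on)
  then show ?thesis
    using True assms by (auto simp: Wp_tv_dist tv_dist_nonneg dest: inj_onD)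
qed (use assms in \<open>simp add: Wp_tv_dist\<close>)

lemma tv_dist_return_pmf: "tv_dist (return_pmf x) \<mu> = 1 - pmf \<mu> x"
proof -
  have mismatch: "mismatch_prob \<pi> = 1 - pmf \<mu> x" if "\<pi> \<in> couplings (return_pmf x) \<mu>" for \<pi>
  proof -
    have "{q. fst q \<noteq> snd q} \<inter> set_pmf \<pi> = snd -` (- {x}) \<inter> set_pmf \<pi>"
      using set_pmf_couplings(1)[OF that] by auto
    then have "mismatch_prob \<pi> = measure_pmf.prob \<pi> (snd -` (- {x}))"
      unfolding mismatch_prob_def by (metis measure_Int_set_pmf)
    also have "\<dots> = measure_pmf.prob \<mu> (- {x})"
      using that by (simp add: couplings_def flip: measure_map_pmf)
    also have "\<dots> = 1 - pmf \<mu> x"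
      using measure_pmf.prob_compl[of "{x}" \<mu>] by (simp add: measure_pmf_single Compl_eq_Diff_UNIV)
    finally show ?thesis .
  qed
  show ?thesis
  proof (rule antisym)
    show "tv_dist (return_pmf x) \<mu> \<le> 1 - pmf \<mu> x"
      using tv_dist_le_mismatch_prob[OF pair_pmf_in_couplings, of "return_pmf x" \<mu>]
        mismatch[OF pair_pmf_in_couplings]
      by simp
    show "1 - pmf \<mu> x \<le> tv_dist (return_pmf x) \<mu>"
      by (rule tv_dist_greatest) (simp add: mismatch)
  qed
qed

lemma tv_dist_eq_1_iff: "tv_dist \<mu> \<nu> = 1 \<longleftrightarrow> set_pmf \<mu> \<inter> set_pmf \<nu> = {}"
proof
  assume disjoint: "set_pmf \<mu> \<inter> set_pmf \<nu> = {}"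
  have "1 \<le> mismatch_prob \<pi>" if "\<pi> \<in> couplings \<mu> \<nu>" for \<pi>
  proof -
    have "{q. fst q \<noteq> snd q} \<inter> set_pmf \<pi> = UNIV \<inter> set_pmf \<pi>"
      using set_pmf_couplings[OF that] disjoint by auto (meson disjoint_iff)
    then have "mismatch_prob \<pi> = measure_pmf.prob \<pi> UNIV"
      unfolding mismatch_prob_def by (metis measure_Int_set_pmf)
    then show ?thesis
      by simp
  qed
  then show "tv_dist \<mu> \<nu> = 1"
    using tv_dist_greatest[of \<mu> \<nu> 1] tv_dist_le_1[of \<mu> \<nu>] by force
next
  assume "tv_dist \<mu> \<nu> = 1"
  show "set_pmf \<mu> \<inter> set_pmf \<nu> = {}"
  proof (rule ccontr)
    assume "set_pmf \<mu> \<inter> set_pmf \<nu> \<noteq> {}"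
    then obtain z where z: "z \<in> set_pmf \<mu>" "z \<in> set_pmf \<nu>" by blast
    have "mismatch_prob (pair_pmf \<mu> \<nu>) \<le> measure_pmf.prob (pair_pmf \<mu> \<nu>) (- {(z, z)})"
      unfolding mismatch_prob_def by (intro measure_pmf.finite_measure_mono) auto
    also have "\<dots> = 1 - pmf \<mu> z * pmf \<nu> z"
      using measure_pmf.prob_compl[of "{(z, z)}" "pair_pmf \<mu> \<nu>"]
      by (simp add: measure_pmf_single pmf_pair Compl_eq_Diff_UNIV)
    also have "\<dots> < 1"
      using z by (simp add: set_pmf_iff pmf_nonneg order.strict_iff_order)
    finally show False
      using tv_dist_le_mismatch_prob[OF pair_pmf_in_couplings, of \<mu> \<nu>] \<open>tv_dist \<mu> \<nu> = 1\<close> by simp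
  qed
qed

lemma pmf_map_pmf_bij: "bij \<sigma> \<Longrightarrow> pmf (map_pmf \<sigma> \<mu>) x = pmf \<mu> (inv \<sigma> x)"
  by (metis bij_inv_eq_iff bij_is_inj pmf_map_inj')

lemma tv_dist_map_pmf_bij:
  assumes "bij \<sigma>"
  shows "tv_dist (map_pmf \<sigma> \<mu>) (map_pmf \<sigma> \<nu>) = tv_dist \<mu> \<nu>"
proof -
  let ?push = "map_pmf (map_prod \<sigma> \<sigma>)" and ?pull = "map_pmf (map_prod (inv \<sigma>) (inv \<sigma>))"
  have inv_\<sigma>: "inv \<sigma> \<circ> \<sigma> = id" "\<sigma> \<circ> inv \<sigma> = id"
    using assms by (simp_all add: bij_is_inj bij_is_surj flip: surj_iff)
  have couplings_push: "couplings (map_pmf \<sigma> \<mu>) (map_pmf \<sigma> \<nu>) = ?push ` couplings \<mu> \<nu>"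
  proof (intro equalityI subsetI)
    fix \<pi> assume \<pi>: "\<pi> \<in> couplings (map_pmf \<sigma> \<mu>) (map_pmf \<sigma> \<nu>)"
    have "map_pmf (inv \<sigma>) (map_pmf \<sigma> \<rho>) = \<rho>" for \<rho>
      by (simp add: pmf.map_comp inv_\<sigma> pmf.map_id)
    moreover have "map_pmf fst (?pull \<pi>) = map_pmf (inv \<sigma>) (map_pmf fst \<pi>)"
      "map_pmf snd (?pull \<pi>) = map_pmf (inv \<sigma>) (map_pmf snd \<pi>)"
      by (simp_all add: pmf.map_comp o_def)
    ultimately have "?pull \<pi> \<in> couplings \<mu> \<nu>"
      using \<pi> by (simp add: couplings_def)
    moreover have "\<pi> = ?push (?pull \<pi>)"
      by (simp add: pmf.map_comp map_prod.comp inv_\<sigma> map_prod.id pmf.map_id)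
    ultimately show "\<pi> \<in> ?push ` couplings \<mu> \<nu>" by blast
  qed (auto simp: couplings_def pmf.map_comp o_def)
  have mismatch_push: "mismatch_prob (?push \<pi>) = mismatch_prob \<pi>" for \<pi>
  proof -
    have "map_prod \<sigma> \<sigma> -` {q. fst q \<noteq> snd q} = {q. fst q \<noteq> snd q}"
      using assms by (auto simp: bij_is_inj inj_eq)
    then show ?thesis by (simp add: mismatch_prob_def)
  qed
  show ?thesis
    unfolding tv_dist_def couplings_push image_comp o_def mismatch_push ..
qed

lemma tv_isometry_return_pmf:
  assumes "bij f" and iso: "\<And>\<mu> \<nu>. tv_dist (f \<mu>) (f \<nu>) = tv_dist \<mu> \<nu>"
  obtains y where "f (return_pmf x) = return_pmf y"
proof -
  have f_inv: "f (inv f \<nu>) = \<nu>" for \<nu>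
    using assms by (simp add: bij_is_surj surj_f_inv_f)
  obtain y where y: "y \<in> set_pmf (f (return_pmf x))"
    using set_pmf_not_empty by fastforce
  have "set_pmf (inv f (return_pmf y)) \<subseteq> {x}"
  proof
    fix z assume z: "z \<in> set_pmf (inv f (return_pmf y))"
    show "z \<in> {x}"
    proof (rule ccontr)
      assume "z \<notin> {x}"
      then have "tv_dist (f (return_pmf x)) (f (return_pmf z)) = 1"
        by (simp add: iso tv_dist_eq_1_iff)
      then have "y \<notin> set_pmf (f (return_pmf z))"
        using y by (auto simp: tv_dist_eq_1_iff)
      then have "tv_dist (f (inv f (return_pmf y))) (f (return_pmf z)) = 1"
        by (simp add: f_inv tv_dist_eq_1_iff)
      then show False
        using z by (simp add: iso tv_dist_eq_1_iff)
    qed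
  qed
  then have "f (return_pmf x) = return_pmf y"
    by (metis f_inv set_pmf_subset_singleton)
  then show thesis ..
qed

lemma tv_isometry_eq_map_pmf:
  assumes "bij f" and iso: "\<And>\<mu> \<nu>. tv_dist (f \<mu>) (f \<nu>) = tv_dist \<mu> \<nu>"
  obtains \<sigma> where "bij \<sigma>" "\<And>\<mu>. f \<mu> = map_pmf \<sigma> \<mu>"
proof -
  have f_inv: "f (inv f \<nu>) = \<nu>" for \<nu>
    using assms by (simp add: bij_is_surj surj_f_inv_f)
  have iso_inv: "tv_dist (inv f \<mu>) (inv f \<nu>) = tv_dist \<mu> \<nu>" for \<mu> \<nu>
    by (metis iso f_inv)
  define \<sigma> where "\<sigma> x = (SOME y. f (return_pmf x) = return_pmf y)" for x
  have f_return: "f (return_pmf x) = return_pmf (\<sigma> x)" for x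
    unfolding \<sigma>_def by (rule someI_ex) (meson tv_isometry_return_pmf[OF assms])
  have "inj \<sigma>"
    by (rule injI) (metis \<open>bij f\<close> bij_is_inj f_return inj_eq return_pmf_inj)
  moreover have "y \<in> range \<sigma>" for y
  proof -
    obtain x where "inv f (return_pmf y) = return_pmf x"
      using tv_isometry_return_pmf[OF bij_imp_bij_inv[OF \<open>bij f\<close>] iso_inv] .
    then have "\<sigma> x = y"
      by (metis f_inv f_return return_pmf_inj)
    then show ?thesis by blast
  qed
  ultimately have "bij \<sigma>"
    unfolding bij_def by blast
  have "pmf (f \<mu>) y = pmf (map_pmf \<sigma> \<mu>) y" for \<mu> y
  proof -
    have "y = \<sigma> (inv \<sigma> y)"
      using \<open>bij \<sigma>\<close> by (simp add: bij_is_surj surj_f_inv_f)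
    then have "tv_dist (return_pmf y) (f \<mu>) = tv_dist (return_pmf (inv \<sigma> y)) \<mu>"
      by (metis iso f_return)
    then show ?thesis
      using \<open>bij \<sigma>\<close> by (simp add: tv_dist_return_pmf pmf_map_pmf_bij)
  qed
  then show thesis
    using \<open>bij \<sigma>\<close> by (intro that) (auto intro: pmf_eqI)
qed

theorem corollary2p2:
  fixes p :: real and f :: "'a::countable pmf \<Rightarrow> 'a pmf"
  assumes two: "\<exists>x y :: 'a. x \<noteq> y"
    and p: "p > 0"
  shows "((bij f \<and> (\<forall>\<mu> \<nu>. Wp p (f \<mu>) (f \<nu>) = Wp p \<mu> \<nu>)) \<longrightarrow>
           (\<exists>\<sigma> :: 'a \<Rightarrow> 'a. bij \<sigma> \<and> (\<forall>\<mu> x. pmf (f \<mu>) x = pmf \<mu> (inv \<sigma> x)))) \<and>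
         (\<forall>\<sigma> :: 'a \<Rightarrow> 'a. bij \<sigma> \<longrightarrow>
           ((\<exists>g :: 'a pmf \<Rightarrow> 'a pmf. \<forall>\<mu> x. pmf (g \<mu>) x = pmf \<mu> (inv \<sigma> x)) \<and>
            (\<forall>g :: 'a pmf \<Rightarrow> 'a pmf. (\<forall>\<mu> x. pmf (g \<mu>) x = pmf \<mu> (inv \<sigma> x)) \<longrightarrow>
               (\<forall>\<mu> \<nu>. Wp p (g \<mu>) (g \<nu>) = Wp p \<mu> \<nu>))))"
proof (intro conjI impI allI)
  assume "bij f \<and> (\<forall>\<mu> \<nu>. Wp p (f \<mu>) (f \<nu>) = Wp p \<mu> \<nu>)"
  then have "bij f" and "tv_dist (f \<mu>) (f \<nu>) = tv_dist \<mu> \<nu>" for \<mu> \<nu>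
    using Wp_eq_iff_tv_dist_eq[OF p] by blast+
  then obtain \<sigma> where "bij \<sigma>" "\<And>\<mu>. f \<mu> = map_pmf \<sigma> \<mu>"
    using tv_isometry_eq_map_pmf by blast
  then show "\<exists>\<sigma>. bij \<sigma> \<and> (\<forall>\<mu> x. pmf (f \<mu>) x = pmf \<mu> (inv \<sigma> x))"
    by (auto simp: pmf_map_pmf_bij)
next
  fix \<sigma> :: "'a \<Rightarrow> 'a" assume "bij \<sigma>"
  then show "\<exists>g. \<forall>\<mu> x. pmf (g \<mu>) x = pmf \<mu> (inv \<sigma> x)"
    by (intro exI[of _ "map_pmf \<sigma>"]) (simp add: pmf_map_pmf_bij)
  fix g :: "'a pmf \<Rightarrow> 'a pmf" and \<mu> \<nu> :: "'a pmf"
  assume "\<forall>\<mu> x. pmf (g \<mu>) x = pmf \<mu> (inv \<sigma> x)"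
  then have "g = map_pmf \<sigma>"
    using \<open>bij \<sigma>\<close> by (auto intro!: pmf_eqI simp: pmf_map_pmf_bij)
  then show "Wp p (g \<mu>) (g \<nu>) = Wp p \<mu> \<nu>"
    using \<open>bij \<sigma>\<close> by (simp add: Wp_eq_iff_tv_dist_eq[OF p] tv_dist_map_pmf_bij)
qed

end
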